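(* Let $n\ge1$, $k_1,k_2,\ell_2\ge0$ and $\ell_1\ge-1$ be integers with $k_1+k_2=\ell_1+\ell_2=d$ and $k_2<\ell_2$, and suppose that the pairs $(n+d+2,k_1)$, $(n+k_2+1,k_2)$, $(n+d+2,\ell_1)$, $(n+\ell_2+1,\ell_2)$ are valid. Then, regarding both sides as polynomials in $q$, the leading term of $$u(f^*(\cdot,q),n+d+2,q,k_1,k_2)-u(f^*(\cdot,q),n+d+2,q,\ell_1,\ell_2)$$ is $q^{2k_1+k_2}$; in particular $u(f^*(\cdot,q),n+d+2,q,k_1,k_2)>u(f^*(\cdot,q),n+d+2,q,\ell_1,\ell_2)$ for all sufficiently large $q$.
   Context: A pair of integers $(m,k)$ is valid if $-1\le k\le\frac{m-1}{2}$. For a function $\phi$ on integers $\ge-1$ with $\phi(-1)=0$, $m\ge1$ and valid $(m,k)$, let $u(\phi,m,q,k)=q^{2k+2}\phi(m-k-1)+\phi(k)+\bigl(\sum_{i=0}^kq^i\bigr)\bigl(\sum_{j=k}^{m-2}q^j\bigr)$ (empty sums are $0$), and for integers $k_1,k_2$ with $(m,k_1)$ and $(m-k_1-1,k_2)$ valid let $u(\phi,m,q,k_1,k_2)=q^{2k_1+2}u(\phi,m-k_1-1,q,k_2)+\phi(k_1)+\bigl(\sum_{i=0}^{k_1}q^i\bigr)\bigl(\sum_{j=k_1}^{m-2}q^j\bigr)$. Let $k^*(m)=m-2^{\lfloor\log_2 m\rfloor}$. The polynomials $f^*(m,q)$ are defined by $f^*(-1,q)=f^*(0,q)=f^*(1,q)=0$,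 $f^*(2,q)=1$, $f^*(3,q)=q^2+1$, $f^*(4,q)=q^4+2q^2+q+1$ and $f^*(m,q)=u(f^*(\cdot,q),m,q,k^*(m))$ for $m\ge5$. *)

theory Defs
  imports "HOL-Computational_Algebra.Polynomial" "HOL-Library.Discrete_Functions"
begin

text \<open>Polynomials in the variable q are elements of type int poly; q itself is monom 1 1.
  Integer arguments m, k range over int (k may be -1).\<close>

definition valid :: "int \<Rightarrow> int \<Rightarrow> bool" where
  "valid m k \<longleftrightarrow> -1 \<le> k \<and> 2 * k \<le> m - 1"

text \<open>geo a b = sum of q^j for j = a..b (empty if a > b); only nonnegative exponents
  occur (a negative lower index only arises where the companion factor is 0).\<close>
definition geo :: "int \<Rightarrow> int \<Rightarrow> int poly" where
  "geo a b = (\<Sum>j\<in>{a..b}. if 0 \<le> j then monom 1 (nat j) else 0)"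

definition u1 :: "(int \<Rightarrow> int poly) \<Rightarrow> int \<Rightarrow> int \<Rightarrow> int poly" where
  "u1 \<phi> m k = monom 1 (nat (2 * k + 2)) * \<phi> (m - k - 1) + \<phi> k + geo 0 k * geo k (m - 2)"

definition u2 :: "(int \<Rightarrow> int poly) \<Rightarrow> int \<Rightarrow> int \<Rightarrow> int \<Rightarrow> int poly" where
  "u2 \<phi> m k1 k2 = monom 1 (nat (2 * k1 + 2)) * u1 \<phi> (m - k1 - 1) k2 + \<phi> k1
     + geo 0 k1 * geo k1 (m - 2)"

definition kstar :: "int \<Rightarrow> int" where
  "kstar m = m - 2 ^ floor_log (nat m)"

lemma kstar_bounds:
  assumes "m \<ge> 5" shows "0 \<le> kstar m" "kstar m < m"
proof -
  have "2 ^ floor_log (nat m) \<le> nat m" using assms floor_log_exp2_le[of "nat m"] by simp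
  hence "(2::int) ^ floor_log (nat m) \<le> m" using assms
  proof -
    have "int (2 ^ floor_log (nat m)) \<le> int (nat m)" using \<open>2 ^ floor_log (nat m) \<le> nat m\<close> by linarith
    thus ?thesis using assms by simp
  qed
  thus "0 \<le> kstar m" unfolding kstar_def by simp
  have "(0::int) < 2 ^ floor_log (nat m)" by simp
  thus "kstar m < m" unfolding kstar_def by simp
qed

function fstar :: "int \<Rightarrow> int poly" where
  "fstar m = (if m \<le> 1 then 0
     else if m = 2 then 1
     else if m = 3 then monom 1 2 + 1
     else if m = 4 then monom 1 4 + monom 2 2 + monom 1 1 + 1
     else monom 1 (nat (2 * kstar m + 2)) * fstar (m - kstar m - 1) + fstar (kstar m)
            + geo 0 (kstar m) * geo (kstar m) (m - 2))"
  by pat_completeness auto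
termination
proof (relation "measure (\<lambda>m. nat (m + 1))")
  show "wf (measure (\<lambda>m. nat (m + 1)))" by simp
next
  fix m :: int
  assume a: "\<not> m \<le> 1" "m \<noteq> 2" "m \<noteq> 3" "m \<noteq> 4"
  hence m5: "m \<ge> 5" by linarith
  note b = kstar_bounds[OF m5]
  show "(m - kstar m - 1, m) \<in> measure (\<lambda>m. nat (m + 1))" using b m5 by simp
  show "(kstar m, m) \<in> measure (\<lambda>m. nat (m + 1))" using b m5 by simp
qed

text \<open>The recursive clause agrees with the paper's definition f*(m) = u(f*, m, q, k*(m)).\<close>
declare fstar.simps[simp del]

lemma fstar_rec: "m \<ge> 5 \<Longrightarrow> fstar m = u1 fstar m (kstar m)"
  by (subst fstar.simps) (simp add: u1_def)

end

theory Submission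
  imports Defs
begin

text \<open>Write X for the variable q and put K = k1 + 1, S = k1 + k2 + 1. Multiplying by the monic
  cubic X (X - 1)^2 turns the two products of geometric sums in u into short signed sums of powers
  of X. The resulting expression for X (X - 1)^2 u consists of terms that depend only on n and S,
  and hence cancel in the difference, and of the terms
  X^(2K+1) (X - 1)^2 f*(k2) + X (X - 1)^2 f*(k1) + X^(2K+k2+1) - X^(2K) + X^K.
  All other surviving terms have smaller degree than X^(2K+k2+1). For the f* terms this
  follows from deg f*(m) \<le> 2m - 4 and from the recursion: since k*(m - 1) = k*(m) - 1 whenever
  k*(m) \<ge> 1, the polynomial f*(m) - X^2 f*(m - 1) equals f*(k) - X^2 f*(k - 1) + (X^k + ... + X^(m-2))
  with k = k*(m), so it has degree below m - 1; telescoping gives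
  deg (f*(b + t) - X^(2t) f*(b)) < b + 2t - 2, which bounds the difference of the f*(k2) and
  f*(l2) terms. Dividing by X (X - 1)^2 yields a monic polynomial of degree 2 k1 + k2.\<close>

text \<open>A defined constant rather than an abbreviation, so that the simplifier treats X as an atom
  instead of multiplying out coefficient lists.\<close>

definition X :: "int poly" where "X = [:0, 1:]"

lemma monom_one_eq_X_power: "monom 1 n = X ^ n"
  by (simp add: X_def monom_altdef)

text \<open>The bound is an integer so that bounds such as 2 m - 3 make sense for every m; a bound
  B \<le> 0 forces p = 0.\<close>

definition vanishes_from :: "'a::zero poly \<Rightarrow> int \<Rightarrow> bool" where
  "vanishes_from p B \<longleftrightarrow> (\<forall>j. B \<le> int j \<longrightarrow> coeff p j = 0)"

lemma vanishes_from_iff_degree: "vanishes_from p B \<longleftrightarrow> p = 0 \<or> int (degree p) < B"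
  unfolding vanishes_from_def
  by (metis coeff_0 coeff_eq_0 leading_coeff_0_iff linorder_not_le order.strict_trans1
      of_nat_less_iff)

lemma vanishes_from_mono: "vanishes_from p B \<Longrightarrow> B \<le> C \<Longrightarrow> vanishes_from p C"
  unfolding vanishes_from_def by auto

lemma vanishes_from_add:
  "vanishes_from p B \<Longrightarrow> vanishes_from r B \<Longrightarrow> vanishes_from (p + r) B"
  unfolding vanishes_from_def by auto

lemma vanishes_from_diff:
  fixes p r :: "'a::ab_group_add poly"
  shows "vanishes_from p B \<Longrightarrow> vanishes_from r B \<Longrightarrow> vanishes_from (p - r) B"
  unfolding vanishes_from_def by auto

lemma vanishes_from_minus:
  fixes p :: "'a::ab_group_add poly"
  shows "vanishes_from p B \<Longrightarrow> vanishes_from (- p) B"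
  unfolding vanishes_from_def by auto

lemma vanishes_from_mult:
  fixes p r :: "'a::comm_semiring_0 poly"
  assumes "vanishes_from p B" "vanishes_from r C"
  shows "vanishes_from (p * r) (B + C - 1)"
  using assms degree_mult_le[of p r] unfolding vanishes_from_iff_degree by auto

lemma vanishes_from_X_power: "vanishes_from (X ^ n) (int n + 1)"
  by (simp add: vanishes_from_iff_degree X_def degree_power_eq)

lemma degree_monom_add_vanishes_from:
  assumes "vanishes_from r (int B)" "c \<noteq> 0"
  shows "degree (monom c B + r) = B" "lead_coeff (monom c B + r) = c"
proof -
  have r: "coeff r j = 0" if "int B \<le> int j" for j
    using assms(1) that unfolding vanishes_from_def by blast
  have "degree (monom c B + r) \<le> B"
    using r by (intro degree_le) (simp add: coeff_monom)
  moreover have "B \<le> degree (monom c B + r)"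
    using r[of B] assms(2) by (intro le_degree) simp
  ultimately show "degree (monom c B + r) = B" by (rule antisym)
  then show "lead_coeff (monom c B + r) = c"
    using r[of B] by simp
qed

lemma monic_factor_degree_lead_coeff:
  fixes p d :: "'a::idom poly"
  assumes "lead_coeff p = 1" "lead_coeff (p * d) = 1"
  shows "degree d = degree (p * d) - degree p" "lead_coeff d = 1"
proof -
  show "lead_coeff d = 1" using assms by (simp add: lead_coeff_mult)
  then have "p \<noteq> 0" "d \<noteq> 0" using assms(1) by auto
  then show "degree d = degree (p * d) - degree p" by (simp add: degree_mult_eq)
qed

lemma geo_empty: "b < a \<Longrightarrow> geo a b = 0"
  unfolding geo_def by simp

lemma geo_eq_sum:
  assumes "0 \<le> a" "a \<le> b"
  shows "geo a b = (\<Sum>i=nat a..nat b. X ^ i)"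
proof -
  have "geo a b = (\<Sum>j\<in>int ` {nat a..nat b}. monom 1 (nat j))"
    using assms unfolding geo_def image_int_atLeastAtMost by (intro sum.cong) auto
  also have "\<dots> = (\<Sum>i=nat a..nat b. X ^ i)"
    by (subst sum.reindex) (auto simp: monom_one_eq_X_power)
  finally show ?thesis .
qed

lemma X_minus_1_mult_geo:
  assumes "0 \<le> a" "a \<le> b + 1"
  shows "(X - 1) * geo a b = X ^ nat (b + 1) - X ^ nat a"
proof (cases "a = b + 1")
  case False
  then have "a \<le> b" "nat a \<le> nat b" "Suc (nat b) = nat (b + 1)" using assms by auto
  then have "(X - 1) * geo a b = - ((1 - X) * (\<Sum>i=nat a..nat b. X ^ i))"
    using assms geo_eq_sum[of a b] by (metis minus_diff_eq mult_minus_left)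
  also have "\<dots> = X ^ nat (b + 1) - X ^ nat a"
    using sum_gp_multiplied[OF \<open>nat a \<le> nat b\<close>, of X] \<open>Suc (nat b) = nat (b + 1)\<close>
    by (simp only: minus_diff_eq)
  finally show ?thesis .
qed (simp add: geo_empty)

lemma X_mult_geo:
  assumes "0 \<le> a"
  shows "X * geo a b = geo (a + 1) (b + 1)"
proof (cases "a \<le> b")
  case True
  have "X * geo a b = (\<Sum>i=nat a..nat b. X ^ Suc i)"
    using assms True by (simp add: geo_eq_sum sum_distrib_left)
  also have "\<dots> = (\<Sum>i=Suc (nat a)..Suc (nat b). X ^ i)"
    by (rule sum.shift_bounds_cl_Suc_ivl[symmetric])
  also have "\<dots> = geo (a + 1) (b + 1)"
    using assms True geo_eq_sum[of "a + 1" "b + 1"] by (simp add: Suc_nat_eq_nat_zadd1 ac_simps)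
  finally show ?thesis .
qed (simp add: geo_empty)

lemma geo_0_eq: "0 \<le> k \<Longrightarrow> geo 0 k = 1 + geo 1 k"
proof -
  assume "0 \<le> k"
  then have "{0..k} = insert 0 {1..k}" by auto
  then show ?thesis unfolding geo_def by simp
qed

lemma vanishes_from_geo: "vanishes_from (geo a b) (b + 1)"
  unfolding vanishes_from_def geo_def
  by (auto simp: coeff_sum coeff_monom intro!: sum.neutral)

text \<open>Stated with the summation bound K - 1 for a natural number K, so that the empty sum
  (K = 0) is included; the factor X absorbs the exponent K - 1.\<close>

lemma X_mult_geo_product:
  fixes K :: nat
  assumes "int K \<le> M + 2"
  shows "X * (X - 1)^2 * (geo 0 (int K - 1) * geo (int K - 1) M)
    = (X ^ K - 1) * (X ^ nat (M + 2) - X ^ K)"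
proof (cases K)
  case (Suc k)
  have "nat (M + 2) = Suc (nat (M + 1))" "nat (int k + 1) = K" using assms Suc by auto
  then have powers: "X ^ nat (M + 2) = X * X ^ nat (M + 1)" "X ^ K = X * X ^ k"
    "nat (int k + 1) = K"
    using Suc by simp_all
  have "X * (X - 1)^2 * (geo 0 (int k) * geo (int k) M)
      = ((X - 1) * geo 0 (int k)) * (X * ((X - 1) * geo (int k) M))"
    by (simp only: power2_eq_square ac_simps)
  also have "\<dots> = (X ^ K - 1) * (X * (X ^ nat (M + 1) - X ^ k))"
    using assms Suc X_minus_1_mult_geo[of 0 "int k"] X_minus_1_mult_geo[of "int k" M] powers
    by simp
  also have "\<dots> = (X ^ K - 1) * (X ^ nat (M + 2) - X ^ K)"
    using powers by (simp only: right_diff_distrib)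
  finally show ?thesis using Suc by simp
qed (simp add: geo_empty)

lemma fstar_le_1: "m \<le> 1 \<Longrightarrow> fstar m = 0"
  by (simp add: fstar.simps)

lemma fstar_2: "fstar 2 = 1"
  by (simp add: fstar.simps)

lemma fstar_3: "fstar 3 = X ^ 2 + 1"
  by (simp add: fstar.simps monom_one_eq_X_power)

lemma fstar_4: "fstar 4 = X ^ 4 + 2 * X ^ 2 + X + 1"
  by (simp add: fstar.simps X_def monom_altdef numeral_poly)

lemma double_kstar_less: "m \<ge> 5 \<Longrightarrow> 2 * kstar m < m"
proof -
  assume "m \<ge> 5"
  have "int (nat m) < int (2 * 2 ^ floor_log (nat m))"
    using floor_log_exp2_gt[of "nat m"] by linarith
  with \<open>m \<ge> 5\<close> show ?thesis unfolding kstar_def by simp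
qed

lemma vanishes_from_fstar: "vanishes_from (fstar m) (2 * m - 3)"
proof (induction m rule: fstar.induct)
  case (1 m)
  show ?case
  proof (cases "m \<le> 4")
    case True
    then consider "m \<le> 1" | "m = 2" | "m = 3" | "m = 4" by linarith
    then show ?thesis
      by cases (simp_all add: fstar_le_1 fstar_2 fstar_3 fstar_4 vanishes_from_iff_degree X_def
          numeral_poly one_pCons eval_nat_numeral)
  next
    case False
    then have m: "m \<ge> 5" by simp
    define k where "k = kstar m"
    have k: "0 \<le> k" "2 * k < m" using kstar_bounds[OF m] double_kstar_less[OF m] k_def by auto
    have "vanishes_from (X ^ nat (2 * k + 2) * fstar (m - k - 1)) (2 * m - 3)"
      using vanishes_from_mult[OF vanishes_from_X_power[of "nat (2 * k + 2)"] "1.IH"(1)] False k k_def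
      by simp
    moreover have "vanishes_from (fstar k) (2 * m - 3)"
      using "1.IH"(2) False k k_def by (auto elim: vanishes_from_mono)
    moreover have "vanishes_from (geo 0 k * geo k (m - 2)) (2 * m - 3)"
      using vanishes_from_mult[OF vanishes_from_geo vanishes_from_geo, of 0 k k "m - 2"] k m
      by (elim vanishes_from_mono) linarith
    ultimately show ?thesis
      using fstar_rec[OF m] by (simp add: u1_def monom_one_eq_X_power k_def vanishes_from_add)
  qed
qed

lemma kstar_5: "kstar 5 = 1"
proof -
  have "floor_log (nat 5) = 2" by (rule floor_log_eqI) auto
  then show ?thesis unfolding kstar_def by simp
qed

lemma kstar_minus_1:
  assumes "m \<ge> 6" "kstar m \<ge> 1"
  shows "kstar (m - 1) = kstar m - 1"
proof -
  define L where "L = floor_log (nat m)"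
  have "int (nat m) < int (2 * 2 ^ L)"
    using floor_log_exp2_gt[of "nat m"] unfolding L_def by linarith
  moreover have "2 ^ L \<le> m - 1" using assms(2) unfolding kstar_def L_def by simp
  ultimately have "floor_log (nat (m - 1)) = L"
    using assms(1) by (intro floor_log_eqI) (simp_all add: le_nat_iff nat_less_iff)
  then show ?thesis unfolding kstar_def L_def by simp
qed

lemma fstar_4_eq_u1: "fstar 4 = u1 fstar 4 0"
  by (simp add: u1_def fstar_3 fstar_4 fstar_le_1 geo_eq_sum monom_one_eq_X_power algebra_simps
      eval_nat_numeral)

lemma fstar_pred_eq_u1:
  assumes "m \<ge> 5" "kstar m \<ge> 1"
  shows "fstar (m - 1) = u1 fstar (m - 1) (kstar m - 1)"
proof (cases "m = 5")
  case True
  then show ?thesis using fstar_4_eq_u1 kstar_5 by simp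
next
  case False
  then show ?thesis
    using assms fstar_rec[of "m - 1"] kstar_minus_1[of m] by simp
qed

lemma fstar_minus_X_sq_fstar_pred:
  assumes "m \<ge> 5"
  shows "fstar m - X ^ 2 * fstar (m - 1)
    = fstar (kstar m) - X ^ 2 * fstar (kstar m - 1) + geo (kstar m) (m - 2)"
proof -
  define k where "k = kstar m"
  have k: "0 \<le> k" "2 * k < m"
    using kstar_bounds[OF assms] double_kstar_less[OF assms] k_def by auto
  have fstar_m:
    "fstar m = X ^ nat (2 * k + 2) * fstar (m - k - 1) + fstar k + geo 0 k * geo k (m - 2)"
    using fstar_rec[OF assms] by (simp add: u1_def monom_one_eq_X_power k_def)
  show ?thesis
  proof (cases "k = 0")
    case True
    then show ?thesis using fstar_m k_def by (simp add: fstar_le_1 geo_eq_sum)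
  next
    case False
    then have "k \<ge> 1" using k by simp
    have "X ^ 2 * fstar (m - 1) = X ^ 2 * (X ^ nat (2 * k) * fstar (m - k - 1) + fstar (k - 1)
        + geo 0 (k - 1) * geo (k - 1) (m - 3))"
      using fstar_pred_eq_u1[OF assms] \<open>k \<ge> 1\<close>
      by (simp add: u1_def monom_one_eq_X_power k_def)
    also have "\<dots> = X ^ nat (2 * k + 2) * fstar (m - k - 1) + X ^ 2 * fstar (k - 1)
        + (X * geo 0 (k - 1)) * (X * geo (k - 1) (m - 3))"
      using k by (simp add: nat_add_distrib power_add algebra_simps power2_eq_square)
    also have "\<dots> = X ^ nat (2 * k + 2) * fstar (m - k - 1) + X ^ 2 * fstar (k - 1)
        + geo 1 k * geo k (m - 2)"
      using \<open>k \<ge> 1\<close> X_mult_geo[of 0 "k - 1"] X_mult_geo[of "k - 1" "m - 3"] by simp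
    finally show ?thesis
      using fstar_m geo_0_eq[OF k(1)] k_def by (simp add: algebra_simps)
  qed
qed

lemma vanishes_from_fstar_step: "vanishes_from (fstar m - X ^ 2 * fstar (m - 1)) (m - 1)"
proof (cases "m \<le> 4")
  case True
  then consider "m \<le> 1" | "m = 2" | "m = 3" | "m = 4" by linarith
  then show ?thesis
    by cases (simp_all add: fstar_le_1 fstar_2 fstar_3 fstar_4 vanishes_from_iff_degree X_def
        numeral_poly one_pCons eval_nat_numeral)
next
  case False
  then have m: "m \<ge> 5" by simp
  have k: "0 \<le> kstar m" "2 * kstar m < m"
    using kstar_bounds[OF m] double_kstar_less[OF m] by auto
  have "vanishes_from (fstar (kstar m)) (m - 1)"
    "vanishes_from (X ^ 2 * fstar (kstar m - 1)) (m - 1)"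
    using vanishes_from_fstar[of "kstar m"]
      vanishes_from_mult[OF vanishes_from_X_power vanishes_from_fstar, of 2 "kstar m - 1"] k
    by (auto elim!: vanishes_from_mono)
  then show ?thesis
    unfolding fstar_minus_X_sq_fstar_pred[OF m]
    using vanishes_from_geo[of "kstar m" "m - 2"]
    by (simp add: vanishes_from_add vanishes_from_diff)
qed

lemma vanishes_from_fstar_shift:
  assumes "1 \<le> t"
  shows "vanishes_from (fstar (b + int t) - X ^ (2 * t) * fstar b) (2 * int t + b - 2)"
  using assms
proof (induction t rule: nat_induct_at_least)
  case base
  then show ?case using vanishes_from_fstar_step[of "b + 1"] by simp
next
  case (Suc t)
  have "fstar (b + int (Suc t)) - X ^ (2 * Suc t) * fstar b
      = (fstar (b + int t + 1) - X ^ 2 * fstar (b + int t))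
        + X ^ 2 * (fstar (b + int t) - X ^ (2 * t) * fstar b)"
    by (simp add: algebra_simps power_add power2_eq_square)
  moreover have
    "vanishes_from (fstar (b + int t + 1) - X ^ 2 * fstar (b + int t)) (2 * int (Suc t) + b - 2)"
    using vanishes_from_fstar_step[of "b + int t + 1"] by (simp add: vanishes_from_mono)
  moreover have
    "vanishes_from (X ^ 2 * (fstar (b + int t) - X ^ (2 * t) * fstar b)) (2 * int (Suc t) + b - 2)"
    using vanishes_from_mult[OF vanishes_from_X_power[of 2] Suc.IH] by simp
  ultimately show ?case by (simp add: vanishes_from_add)
qed

lemma X_X_minus_1_sq_mult_u2_fstar:
  fixes N K K2 S :: nat
  assumes "S = K + K2"
  shows "X * (X - 1)^2 * u2 fstar (int N + int K + int K2 + 1) (int K - 1) (int K2)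
    = X ^ (2 * S + 3) * (X - 1)^2 * fstar (int N) + X ^ (2 * S + N + 2) - X ^ (2 * S + 2)
      - X ^ (N + S + 1) + X ^ (2 * K + 1) * (X - 1)^2 * fstar (int K2)
      + X * (X - 1)^2 * fstar (int K - 1) + X ^ (2 * K + K2 + 1) - X ^ (2 * K) + X ^ K"
proof -
  define G1 where "G1 = geo 0 (int K - 1) * geo (int K - 1) (int N + int K + int K2 - 1)"
  define G2 where "G2 = geo 0 (int K2) * geo (int K2) (int N + int K2 - 1)"
  have u2_eq: "u2 fstar (int N + int K + int K2 + 1) (int K - 1) (int K2)
      = X ^ (2 * K) * (X ^ (2 * K2 + 2) * fstar (int N) + fstar (int K2) + G2)
        + fstar (int K - 1) + G1"
    unfolding u2_def u1_def monom_one_eq_X_power G1_def G2_def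
    by (simp add: nat_mult_distrib nat_add_distrib algebra_simps)
  have G1: "X * (X - 1)^2 * G1 = (X ^ K - 1) * (X ^ (N + K + K2 + 1) - X ^ K)"
    using X_mult_geo_product[of K "int N + int K + int K2 - 1"] unfolding G1_def
    by (simp add: nat_add_distrib add.assoc)
  have G2: "X * (X - 1)^2 * G2 = (X ^ (K2 + 1) - 1) * (X ^ (N + K2 + 1) - X ^ (K2 + 1))"
    using X_mult_geo_product[of "K2 + 1" "int N + int K2 - 1"] unfolding G2_def
    by (simp add: nat_add_distrib add.assoc)
  define a b c where "a = X ^ K" "b = X ^ K2" "c = X ^ N"
  have pw: "X ^ (2 * S + 3) = X ^ 3 * a^2 * b^2" "X ^ (2 * S + N + 2) = X^2 * a^2 * b^2 * c"
    "X ^ (2 * S + 2) = X^2 * a^2 * b^2" "X ^ (N + S + 1) = X * c * a * b"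
    "X ^ (2 * K + 1) = X * a^2" "X ^ (2 * K + K2 + 1) = X * a^2 * b" "X ^ (2 * K) = a^2"
    "X ^ (K2 + 1) = X * b" "X ^ (N + K2 + 1) = X * c * b" "X ^ (N + K + K2 + 1) = X * c * a * b"
    "X ^ (2 * K2 + 2) = X^2 * b^2"
    unfolding a_b_c_def assms
    by (simp_all only: power_add power_mult power_mult_distrib power_one_right mult.commute[of 2]
        mult_ac)
  have "X * (X - 1)^2 * u2 fstar (int N + int K + int K2 + 1) (int K - 1) (int K2)
      = X^3 * a^2 * b^2 * (X - 1)^2 * fstar (int N) + X * a^2 * (X - 1)^2 * fstar (int K2)
        + a^2 * (X * (X - 1)^2 * G2) + X * (X - 1)^2 * fstar (int K - 1) + X * (X - 1)^2 * G1"
    unfolding u2_eq pw by (simp add: algebra_simps power3_eq_cube power2_eq_square)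
  also have "\<dots> = X^3 * a^2 * b^2 * (X - 1)^2 * fstar (int N) + X^2 * a^2 * b^2 * c - X^2 * a^2 * b^2
      - X * c * a * b + X * a^2 * (X - 1)^2 * fstar (int K2)
      + X * (X - 1)^2 * fstar (int K - 1) + X * a^2 * b - a^2 + a"
    unfolding G1 G2 pw a_b_c_def(1)[symmetric] by (simp add: algebra_simps power2_eq_square)
  finally show ?thesis unfolding pw a_b_c_def(1) .
qed

lemma lead_coeff_X_X_minus_1_sq: "lead_coeff (X * (X - 1)^2) = 1"
  and degree_X_X_minus_1_sq: "degree (X * (X - 1)^2) = 3"
  by (simp_all add: X_def one_pCons power2_eq_square)

lemma u2_fstar_diff_leading_term:
  fixes N K K2 L L2 :: nat
  assumes "L < K" "K + K2 = L + L2"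
  obtains R where
    "X * (X - 1)^2 * (u2 fstar (int N + int K + int K2 + 1) (int K - 1) (int K2)
       - u2 fstar (int N + int L + int L2 + 1) (int L - 1) (int L2)) = monom 1 (2 * K + K2 + 1) + R"
    "vanishes_from R (int (2 * K + K2 + 1))"
proof
  define t where "t = K - L"
  have t: "K = L + t" "L2 = K2 + t" "1 \<le> t" using assms unfolding t_def by auto
  define R where "R = (X ^ (2 * K + 1) * (X - 1)^2 * fstar (int K2)
      - X ^ (2 * L + 1) * (X - 1)^2 * fstar (int L2))
    + X * (X - 1)^2 * (fstar (int K - 1) - fstar (int L - 1))
    - X ^ (2 * L + L2 + 1) - X ^ (2 * K) + X ^ K + X ^ (2 * L) - X ^ L"
  show "X * (X - 1)^2 * (u2 fstar (int N + int K + int K2 + 1) (int K - 1) (int K2)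
       - u2 fstar (int N + int L + int L2 + 1) (int L - 1) (int L2)) = monom 1 (2 * K + K2 + 1) + R"
    unfolding right_diff_distrib[of "X * (X - 1)^2"] monom_one_eq_X_power R_def
      X_X_minus_1_sq_mult_u2_fstar[of "K + K2" K K2 N, OF refl]
      X_X_minus_1_sq_mult_u2_fstar[of "K + K2" L L2 N, OF assms(2)]
    by (simp add: algebra_simps)
  have X_minus_1_sq: "vanishes_from ((X - 1)^2) 3"
    by (simp add: vanishes_from_iff_degree X_def one_pCons power2_eq_square)
  have fstar_diff: "vanishes_from (fstar (int K - 1) - fstar (int L - 1)) (2 * int K - 5)"
    using vanishes_from_fstar[of "int K - 1"] vanishes_from_fstar[of "int L - 1"] assms(1)
    by (intro vanishes_from_diff) (auto elim: vanishes_from_mono)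
  have shift: "X ^ (2 * K + 1) * (X - 1)^2 * fstar (int K2)
      - X ^ (2 * L + 1) * (X - 1)^2 * fstar (int L2)
      = - (X ^ (2 * L + 1) * (X - 1)^2 * (fstar (int K2 + int t) - X ^ (2 * t) * fstar (int K2)))"
    by (simp add: t power_add algebra_simps)
  have shift_term: "vanishes_from
      (X ^ (2 * L + 1) * (X - 1)^2 * (fstar (int K2 + int t) - X ^ (2 * t) * fstar (int K2)))
      (int (2 * K + K2 + 1))"
    using vanishes_from_mult[OF vanishes_from_mult[OF vanishes_from_X_power[of "2 * L + 1"]
        X_minus_1_sq] vanishes_from_fstar_shift[OF t(3), of "int K2"]] t
    by (simp add: algebra_simps)
  have fstar_term:
    "vanishes_from (X * (X - 1)^2 * (fstar (int K - 1) - fstar (int L - 1))) (int (2 * K + K2 + 1))"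
    using vanishes_from_mono[OF vanishes_from_mult[OF vanishes_from_mult[OF vanishes_from_X_power[of 1]
        X_minus_1_sq] fstar_diff]]
    by simp
  have X_power_term: "vanishes_from (X ^ n) (int (2 * K + K2 + 1))" if "n \<le> 2 * K + K2" for n
    using vanishes_from_X_power[of n] that by (elim vanishes_from_mono) simp
  show "vanishes_from R (int (2 * K + K2 + 1))"
    unfolding R_def shift using t
    by (intro vanishes_from_add vanishes_from_diff vanishes_from_minus shift_term fstar_term
        X_power_term) simp_all
qed

lemma u2_fstar_diff_degree_lead_coeff:
  fixes N K K2 L L2 :: nat
  assumes "L < K" "K + K2 = L + L2"
  defines "D \<equiv> u2 fstar (int N + int K + int K2 + 1) (int K - 1) (int K2)
    - u2 fstar (int N + int L + int L2 + 1) (int L - 1) (int L2)"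
  shows "degree D = 2 * K + K2 - 2" "lead_coeff D = 1"
proof -
  obtain R where R: "X * (X - 1)^2 * D = monom 1 (2 * K + K2 + 1) + R"
    "vanishes_from R (int (2 * K + K2 + 1))"
    using u2_fstar_diff_leading_term[OF assms(1,2)] unfolding D_def by metis
  then have "lead_coeff (X * (X - 1)^2 * D) = 1"
    "degree (X * (X - 1)^2 * D) = 2 * K + K2 + 1"
    unfolding R(1) using degree_monom_add_vanishes_from[OF R(2), of 1] by simp_all
  then show "degree D = 2 * K + K2 - 2" "lead_coeff D = 1"
    using monic_factor_degree_lead_coeff[OF lead_coeff_X_X_minus_1_sq, of D] degree_X_X_minus_1_sq
    by simp_all
qed

lemma eventually_poly_pos_at_top:
  fixes p :: "real poly"
  assumes "lead_coeff p > 0"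
  shows "eventually (\<lambda>x. poly p x > 0) at_top"
proof -
  obtain n where "\<forall>x \<ge> n. poly p x \<ge> lead_coeff p" using poly_pinfty_gt_lc[OF assms] by blast
  then show ?thesis using assms unfolding eventually_at_top_linorder by (meson less_le_trans)
qed

theorem lemma3p42:
  fixes n k1 k2 l1 l2 d :: int
  assumes "n \<ge> 1" and "k1 \<ge> 0" and "k2 \<ge> 0" and "l2 \<ge> 0" and "l1 \<ge> -1"
    and "k1 + k2 = d" and "l1 + l2 = d" and "k2 < l2"
    and "valid (n + d + 2) k1" and "valid (n + k2 + 1) k2"
    and "valid (n + d + 2) l1" and "valid (n + l2 + 1) l2"
  shows "degree (u2 fstar (n + d + 2) k1 k2 - u2 fstar (n + d + 2) l1 l2) = nat (2 * k1 + k2)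
       \<and> lead_coeff (u2 fstar (n + d + 2) k1 k2 - u2 fstar (n + d + 2) l1 l2) = 1
       \<and> (\<forall>\<^sub>F q in at_top. poly (map_poly real_of_int (u2 fstar (n + d + 2) l1 l2)) q
                           < poly (map_poly real_of_int (u2 fstar (n + d + 2) k1 k2)) q)"
proof -
  define N K K2 L L2
    where "N = nat n" "K = nat (k1 + 1)" "K2 = nat k2" "L = nat (l1 + 1)" "L2 = nat l2"
  define D where "D = u2 fstar (n + d + 2) k1 k2 - u2 fstar (n + d + 2) l1 l2"
  have "n + d + 2 = int N + int K + int K2 + 1"
    "int N + int L + int L2 + 1 = int N + int K + int K2 + 1" "k1 = int K - 1" "k2 = int K2" "l1 = int L - 1" "l2 = int L2"
    using assms unfolding N_K_K2_L_L2_def by simp_all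
  then have "D = u2 fstar (int N + int K + int K2 + 1) (int K - 1) (int K2)
      - u2 fstar (int N + int L + int L2 + 1) (int L - 1) (int L2)"
    unfolding D_def by (simp only:)
  moreover have "L < K" "K + K2 = L + L2" "2 * K + K2 - 2 = nat (2 * k1 + k2)"
    using assms unfolding N_K_K2_L_L2_def by auto
  ultimately have "degree D = nat (2 * k1 + k2)" "lead_coeff D = 1"
    using u2_fstar_diff_degree_lead_coeff[of L K K2 L2 N] by simp_all
  moreover have "\<forall>\<^sub>F q in at_top. poly (map_poly real_of_int D) q > 0"
    using \<open>lead_coeff D = 1\<close>
    by (intro eventually_poly_pos_at_top) (simp add: lead_coeff_map_poly_nz)
  moreover have "map_poly real_of_int D = map_poly real_of_int (u2 fstar (n + d + 2) k1 k2)
      - map_poly real_of_int (u2 fstar (n + d + 2) l1 l2)"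
    unfolding D_def by (rule poly_eqI) (simp add: coeff_map_poly)
  ultimately show ?thesis unfolding D_def by simp
qed

end
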